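(* Let $\mathcal{U}=\{u_1,\ldots,u_M\}\subset\mathbb{R}\setminus\{0\}$ and $k\ge1$. For $i\in\{1,\ldots,k\}$ let $f_i:\mathbb{R}\to[0,\infty)$ satisfy $f_i(0)\le\sum_{m=1}^Mf_i(u_m)$. Then for integers $0\le w<w'\le k$, $$\sum_{x\in\mathcal{X}_w^k(\mathcal{U})}\prod_{i=1}^kf_i(x_i)\le\big\lceil L^k_{w,w'}\big\rceil\sum_{x'\in\mathcal{X}_{w'}^k(\mathcal{U})}\prod_{i=1}^kf_i(x'_i),\qquad L^k_{w,w'}=\prod_{i=0}^{w'-w-1}\frac{w'-i}{k-w-i}.$$
   Context: $\mathcal{X}_s^k(\mathcal{U})$ is the set of vectors in $\mathbb{R}^k$ with exactly $s$ nonzero entries, each belonging to $\mathcal{U}$. *)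

theory Defs
  imports Complex_Main
begin

text \<open>Vectors in R^k are represented as functions nat => real, with coordinates
  indexed by {1..k} and all other coordinates zero.
  X_s^k(U): vectors with exactly s nonzero entries, each belonging to U.\<close>
definition Xset :: "nat \<Rightarrow> nat \<Rightarrow> real set \<Rightarrow> (nat \<Rightarrow> real) set" where
  "Xset s k U = {x. (\<forall>i. i \<notin> {1..k} \<longrightarrow> x i = 0)
                   \<and> card {i\<in>{1..k}. x i \<noteq> 0} = s
                   \<and> (\<forall>i\<in>{1..k}. x i \<noteq> 0 \<longrightarrow> x i \<in> U)}"

definition Lconst :: "nat \<Rightarrow> nat \<Rightarrow> nat \<Rightarrow> real" where
  "Lconst k w w' = (\<Prod>i=0..<w'-w. real (w' - i) / real (k - w - i))"

end

theory Submission
  imports Defs "HOL-Library.FuncSet"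
begin

text \<open>Grouping the vectors of \<open>X\<^sub>s\<^sup>k(U)\<close> by their support \<open>T\<close>, the sum over one support
  factors as \<open>F T = (\<Prod>i\<in>T. \<Sum>u\<in>U. f\<^sub>i u) * (\<Prod>i\<notin>T. f\<^sub>i 0)\<close>, and the hypothesis
  \<open>f\<^sub>i 0 \<le> \<Sum>u\<in>U. f\<^sub>i u\<close> makes \<open>F\<close> monotone in \<open>T\<close>. Now double count the pairs \<open>T \<subseteq> T'\<close> with
  \<open>|T| = w\<close>, \<open>|T'| = w'\<close>: every \<open>T\<close> lies in \<open>C(k-w, w'-w)\<close> sets \<open>T'\<close> and every \<open>T'\<close>
  contains \<open>C(w', w)\<close> sets \<open>T\<close>, so the \<open>w\<close>-sum is at most
  \<open>C(w', w) / C(k-w, w'-w) = L\<^sup>k\<^sub>w\<^sub>,\<^sub>w\<^sub>'\<close> times the \<open>w'\<close>-sum.\<close>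

text \<open>Like \<^const>\<open>PiE\<close>, but with value \<open>0\<close> instead of \<^const>\<open>undefined\<close> outside \<open>J\<close>,
  matching the encoding of vectors in \<^const>\<open>Xset\<close>.\<close>

definition Pi0 :: "'a set \<Rightarrow> ('a \<Rightarrow> 'b set) \<Rightarrow> ('a \<Rightarrow> 'b::zero) set" where
  "Pi0 J A = {x. (\<forall>i\<in>J. x i \<in> A i) \<and> (\<forall>i. i \<notin> J \<longrightarrow> x i = 0)}"

lemma bij_betw_restrict_Pi0_PiE: "bij_betw (\<lambda>x. restrict x J) (Pi0 J A) (PiE J A)"
proof (rule bij_betw_byWitness[where f' = "\<lambda>x i. if i \<in> J then x i else 0"])
  show "\<forall>x\<in>Pi0 J A. (\<lambda>i. if i \<in> J then restrict x J i else 0) = x"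
    by (auto simp: Pi0_def)
  show "\<forall>x\<in>PiE J A. restrict (\<lambda>i. if i \<in> J then x i else 0) J = x"
    by (auto simp: PiE_def extensional_def)
  show "(\<lambda>x. restrict x J) ` Pi0 J A \<subseteq> PiE J A"
    by (auto simp: Pi0_def)
  show "(\<lambda>x i. if i \<in> J then x i else 0) ` PiE J A \<subseteq> Pi0 J A"
    by (auto simp: Pi0_def)
qed

lemma finite_Pi0:
  assumes "finite J" "\<And>i. i \<in> J \<Longrightarrow> finite (A i)"
  shows "finite (Pi0 J A)"
  unfolding bij_betw_finite[OF bij_betw_restrict_Pi0_PiE] using assms by (rule finite_PiE)

lemma sum_prod_Pi0:
  fixes f :: "'a \<Rightarrow> 'b::zero \<Rightarrow> 'c::comm_semiring_1"
  assumes "finite J" "\<And>i. i \<in> J \<Longrightarrow> finite (A i)"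
  shows "(\<Sum>x\<in>Pi0 J A. \<Prod>i\<in>J. f i (x i)) = (\<Prod>i\<in>J. \<Sum>v\<in>A i. f i v)"
proof -
  have "(\<Sum>x\<in>Pi0 J A. \<Prod>i\<in>J. f i (x i)) = (\<Sum>x\<in>Pi0 J A. \<Prod>i\<in>J. f i (restrict x J i))"
    by (intro sum.cong prod.cong refl) simp
  also have "\<dots> = (\<Sum>x\<in>PiE J A. \<Prod>i\<in>J. f i (x i))"
    by (rule sum.reindex_bij_betw[OF bij_betw_restrict_Pi0_PiE])
  also have "\<dots> = (\<Prod>i\<in>J. \<Sum>v\<in>A i. f i v)"
    by (rule prod_sum_PiE[symmetric]) (use assms in auto)
  finally show ?thesis .
qed

lemma Xset_subset_Pi0: "Xset s k U \<subseteq> Pi0 {1..k} (\<lambda>_. insert 0 U)"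
  by (auto simp: Xset_def Pi0_def)

lemma Xset_support_fibre:
  assumes "0 \<notin> U" "T \<subseteq> {1..k}" "card T = s"
  shows "{x \<in> Xset s k U. {i\<in>{1..k}. x i \<noteq> 0} = T} = Pi0 {1..k} (\<lambda>i. if i \<in> T then U else {0})"
proof (intro set_eqI iffI)
  fix x assume "x \<in> {x \<in> Xset s k U. {i\<in>{1..k}. x i \<noteq> 0} = T}"
  then show "x \<in> Pi0 {1..k} (\<lambda>i. if i \<in> T then U else {0})"
    by (auto simp: Xset_def Pi0_def)
next
  fix x assume x: "x \<in> Pi0 {1..k} (\<lambda>i. if i \<in> T then U else {0})"
  have "{i\<in>{1..k}. x i \<noteq> 0} = T"
  proof (intro set_eqI iffI)
    fix i assume "i \<in> T"
    then have "i \<in> {1..k}"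
      using assms(2) by blast
    with x have "x i \<in> (if i \<in> T then U else {0})"
      unfolding Pi0_def by blast
    then have "x i \<in> U"
      using \<open>i \<in> T\<close> by simp
    then show "i \<in> {i\<in>{1..k}. x i \<noteq> 0}"
      using assms(1) \<open>i \<in> {1..k}\<close> by auto
  qed (use x in \<open>auto simp: Pi0_def split: if_splits\<close>)
  then show "x \<in> {x \<in> Xset s k U. {i\<in>{1..k}. x i \<noteq> 0} = T}"
    using x assms(3) by (auto simp: Xset_def Pi0_def)
qed

lemma finite_subsets_of_card: "finite I \<Longrightarrow> finite {T. T \<subseteq> I \<and> card T = s}"
  by (rule finite_subset[of _ "Pow I"]) auto

lemma sum_Xset_by_support:
  fixes f :: "nat \<Rightarrow> real \<Rightarrow> 'c::comm_semiring_1"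
  assumes "finite U" "0 \<notin> U"
  shows "(\<Sum>x\<in>Xset s k U. \<Prod>i=1..k. f i (x i))
       = (\<Sum>T | T \<subseteq> {1..k} \<and> card T = s. \<Prod>i=1..k. if i \<in> T then \<Sum>u\<in>U. f i u else f i 0)"
proof -
  let ?supp = "\<lambda>x. {i\<in>{1..k}. x i \<noteq> 0}"
  let ?Sub = "{T. T \<subseteq> {1..k} \<and> card T = s}"
  have "finite (Xset s k U)"
    using finite_subset[OF Xset_subset_Pi0 finite_Pi0] assms(1) by simp
  moreover have "?supp ` Xset s k U \<subseteq> ?Sub"
    by (auto simp: Xset_def)
  ultimately have "(\<Sum>x\<in>Xset s k U. \<Prod>i=1..k. f i (x i))
      = (\<Sum>T\<in>?Sub. \<Sum>x\<in>{x \<in> Xset s k U. ?supp x = T}. \<Prod>i=1..k. f i (x i))"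
    by (intro sum.group[symmetric] finite_subsets_of_card) simp_all
  also have "\<dots> = (\<Sum>T\<in>?Sub. \<Prod>i=1..k. \<Sum>v\<in>(if i \<in> T then U else {0}). f i v)"
  proof (rule sum.cong[OF refl])
    fix T assume "T \<in> ?Sub"
    then have "{x \<in> Xset s k U. ?supp x = T} = Pi0 {1..k} (\<lambda>i. if i \<in> T then U else {0})"
      using assms(2) by (intro Xset_support_fibre) auto
    then show "(\<Sum>x\<in>{x \<in> Xset s k U. ?supp x = T}. \<Prod>i=1..k. f i (x i))
        = (\<Prod>i=1..k. \<Sum>v\<in>(if i \<in> T then U else {0}). f i v)"
      using assms(1) by (simp only:) (rule sum_prod_Pi0, auto)
  qed
  also have "\<dots> = (\<Sum>T\<in>?Sub. \<Prod>i=1..k. if i \<in> T then \<Sum>u\<in>U. f i u else f i 0)"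
    by (intro sum.cong prod.cong refl) simp
  finally show ?thesis .
qed

lemma prod_if_mem_mono:
  fixes g h :: "'a \<Rightarrow> 'b::linordered_semidom"
  assumes "T \<subseteq> T'" "\<And>i. i \<in> I \<Longrightarrow> 0 \<le> g i" "\<And>i. i \<in> I \<Longrightarrow> g i \<le> h i"
  shows "(\<Prod>i\<in>I. if i \<in> T then h i else g i) \<le> (\<Prod>i\<in>I. if i \<in> T' then h i else g i)"
  using assms by (intro prod_mono) (auto intro: order_trans)

lemma card_supsets_of_card:
  assumes "finite I" "T \<subseteq> I" "card T \<le> n"
  shows "card {S. S \<subseteq> I \<and> card S = n \<and> T \<subseteq> S} = (card I - card T) choose (n - card T)"
proof -
  have "finite T"
    using assms finite_subset by blast
  have "bij_betw (\<lambda>S. S - T) {S. S \<subseteq> I \<and> card S = n \<and> T \<subseteq> S}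
          {B. B \<subseteq> I - T \<and> card B = n - card T}"
  proof (rule bij_betw_byWitness[where f' = "\<lambda>B. B \<union> T"])
    show "(\<lambda>B. B \<union> T) ` {B. B \<subseteq> I - T \<and> card B = n - card T}
          \<subseteq> {S. S \<subseteq> I \<and> card S = n \<and> T \<subseteq> S}"
    proof (rule image_subsetI)
      fix B assume B: "B \<in> {B. B \<subseteq> I - T \<and> card B = n - card T}"
      then have "finite B"
        using assms(1) finite_subset by blast
      then have "card (B \<union> T) = card B + card T"
        using \<open>finite T\<close> B by (intro card_Un_disjoint) auto
      then show "B \<union> T \<in> {S. S \<subseteq> I \<and> card S = n \<and> T \<subseteq> S}"
        using B assms(2,3) by auto
    qed
  qed (use \<open>finite T\<close> in \<open>auto simp: card_Diff_subset\<close>)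
  then have "card {S. S \<subseteq> I \<and> card S = n \<and> T \<subseteq> S} = card {B. B \<subseteq> I - T \<and> card B = n - card T}"
    by (rule bij_betw_same_card)
  also have "\<dots> = (card I - card T) choose (n - card T)"
    using assms \<open>finite T\<close> by (simp add: n_subsets card_Diff_subset)
  finally show ?thesis .
qed

lemma double_counting_mono_sum:
  fixes F :: "'a set \<Rightarrow> 'b::{ordered_comm_semiring, semiring_1}"
  assumes "finite I" "w \<le> w'" "\<And>T T'. T \<subseteq> T' \<Longrightarrow> T' \<subseteq> I \<Longrightarrow> F T \<le> F T'"
  shows "of_nat ((card I - w) choose (w' - w)) * (\<Sum>T | T \<subseteq> I \<and> card T = w. F T)
       \<le> of_nat (w' choose w) * (\<Sum>T' | T' \<subseteq> I \<and> card T' = w'. F T')"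
proof -
  let ?Sub = "\<lambda>n. {S. S \<subseteq> I \<and> card S = n}"
  have "of_nat ((card I - w) choose (w' - w)) * sum F (?Sub w)
      = (\<Sum>T\<in>?Sub w. \<Sum>T'\<in>{T' \<in> ?Sub w'. T \<subseteq> T'}. F T)"
    using assms(1,2) by (simp add: sum_distrib_left card_supsets_of_card conj_assoc)
  also have "\<dots> \<le> (\<Sum>T\<in>?Sub w. \<Sum>T'\<in>{T' \<in> ?Sub w'. T \<subseteq> T'}. F T')"
    using assms(3) by (intro sum_mono) auto
  also have "\<dots> = (\<Sum>T'\<in>?Sub w'. \<Sum>T\<in>{T \<in> ?Sub w. T \<subseteq> T'}. F T')"
    by (rule sum.swap_restrict[OF finite_subsets_of_card[OF assms(1)] finite_subsets_of_card[OF assms(1)]])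
  also have "\<dots> = (\<Sum>T'\<in>?Sub w'. of_nat (w' choose w) * F T')"
  proof (rule sum.cong[OF refl])
    fix T' assume T': "T' \<in> ?Sub w'"
    then have "{T \<in> ?Sub w. T \<subseteq> T'} = {T. T \<subseteq> T' \<and> card T = w}"
      by auto
    moreover have "finite T'"
      using T' assms(1) finite_subset by blast
    ultimately show "(\<Sum>T\<in>{T \<in> ?Sub w. T \<subseteq> T'}. F T') = of_nat (w' choose w) * F T'"
      using T' by (simp add: n_subsets)
  qed
  also have "\<dots> = of_nat (w' choose w) * sum F (?Sub w')"
    by (simp add: sum_distrib_left)
  finally show ?thesis .
qed

lemma Lconst_eq_binomial_ratio:
  assumes "w \<le> w'" "w' \<le> k"
  shows "Lconst k w w' = real (w' choose w) / real ((k - w) choose (w' - w))"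
proof -
  define d where "d = w' - w"
  have num: "real (w' choose w) = (\<Prod>i=0..<d. real (w' - i) / real (d - i))"
    using assms by (simp add: d_def binomial_symmetric[of w w'] binomial_altdef_of_nat)
  have den: "real ((k - w) choose d) = (\<Prod>i=0..<d. real (k - w - i) / real (d - i))"
    using assms by (simp add: d_def binomial_altdef_of_nat)
  have "real (w' choose w) / real ((k - w) choose d)
      = (\<Prod>i=0..<d. (real (w' - i) / real (d - i)) / (real (k - w - i) / real (d - i)))"
    unfolding num den by (rule prod_dividef[symmetric])
  also have "\<dots> = (\<Prod>i=0..<d. real (w' - i) / real (k - w - i))"
    by (intro prod.cong refl) simp
  finally show ?thesis
    by (simp add: Lconst_def d_def)
qed

theorem lemma8:
  fixes U :: "real set" and k w w' :: nat and f :: "nat \<Rightarrow> real \<Rightarrow> real"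
  assumes "finite U" and "0 \<notin> U" and "k \<ge> 1"
    and "\<And>i t. i \<in> {1..k} \<Longrightarrow> f i t \<ge> 0"
    and "\<And>i. i \<in> {1..k} \<Longrightarrow> f i 0 \<le> (\<Sum>u\<in>U. f i u)"
    and "w < w'" and "w' \<le> k"
  shows "(\<Sum>x\<in>Xset w k U. \<Prod>i=1..k. f i (x i))
         \<le> real_of_int \<lceil>Lconst k w w'\<rceil> * (\<Sum>x\<in>Xset w' k U. \<Prod>i=1..k. f i (x i))"
proof -
  define F where "F T = (\<Prod>i=1..k. if i \<in> T then \<Sum>u\<in>U. f i u else f i 0)" for T
  have sums: "(\<Sum>x\<in>Xset s k U. \<Prod>i=1..k. f i (x i)) = (\<Sum>T | T \<subseteq> {1..k} \<and> card T = s. F T)"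
    for s unfolding F_def using assms(1,2) by (rule sum_Xset_by_support)
  have "F T \<le> F T'" if "T \<subseteq> T'" for T T'
    unfolding F_def using that assms(4,5) by (rule prod_if_mem_mono)
  then have "real ((k - w) choose (w' - w)) * (\<Sum>T | T \<subseteq> {1..k} \<and> card T = w. F T)
           \<le> real (w' choose w) * (\<Sum>T | T \<subseteq> {1..k} \<and> card T = w'. F T)"
    using double_counting_mono_sum[of "{1..k}" w w' F] assms(6) by simp
  moreover have "real ((k - w) choose (w' - w)) > 0"
    using assms(6,7) by simp
  ultimately have "(\<Sum>x\<in>Xset w k U. \<Prod>i=1..k. f i (x i))
      \<le> Lconst k w w' * (\<Sum>x\<in>Xset w' k U. \<Prod>i=1..k. f i (x i))"
    unfolding sums Lconst_eq_binomial_ratio[OF less_imp_le[OF assms(6)] assms(7)]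
    by (simp add: field_simps)
  also have "\<dots> \<le> real_of_int \<lceil>Lconst k w w'\<rceil> * (\<Sum>x\<in>Xset w' k U. \<Prod>i=1..k. f i (x i))"
    using assms(4) by (intro mult_right_mono sum_nonneg prod_nonneg) (auto simp: Xset_def)
  finally show ?thesis .
qed

end
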